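(* Let $(X_{1,\infty},f_{1,\infty},\mu_{1,\infty})$ and $(Y_{1,\infty},g_{1,\infty},\nu_{1,\infty})$ be metric nonautonomous dynamical systems with admissible classes $\mathcal{E}$ (for $f_{1,\infty}$) and $\mathcal{F}$ (for $g_{1,\infty}$), respectively. Let $\pi_{1,\infty}=\{\pi_n\}$ be an $\mathcal{E}$-$\mathcal{F}$-semiconjugacy from $f_{1,\infty}$ to $g_{1,\infty}$. Then $h_{\mathcal{F}}(g_{1,\infty})\le h_{\mathcal{E}}(f_{1,\infty})$.
   Context: A metric NDS consists of probability spaces $(X_n,\mathcal{A}_n,\mu_n)$ and measurable maps $f_n:X_n\to X_{n+1}$ with $f_n\mu_n=\mu_{n+1}$. Notation: $f_k^n=f_{k+n-1}\circ\cdots\circ f_k$, $f_k^0=\mathrm{id}$, $f_k^{-n}$ = preimage under $f_k^n$. $H_\mu(\mathcal{P})=-\sum_P\mu(P)\log\mu(P)$; $h(f_{1,\infty};\mathcal{P}_{1,\infty})=\limsup_n\frac1nH_{\mu_1}(\bigvee_{i=0}^{n-1}f_1^{-i}\mathcal{P}_{i+1})$ for sequences $\mathcal{P}_{1,\infty}=\{\mathcal{P}_n\}$ of finite measurable partitions of $X_n$; $h_{\mathcal{E}}(f_{1,\infty})=\sup_{\mathcal{P}_{1,\infty}\in\mathcal{E}}h(f_{1,\infty};\mathcal{P}_{1,\infty})$. Admissible class: a nonempty class $\mathcal{E}$ of such sequences satisfying (A) each member has uniformly bounded cardinalities $\#\mathcal{P}_n\le N$; (B) closed under passing to coarser sequences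 (termwise coarser); (C) closed under $\mathcal{P}_{1,\infty}\mapsto\{\bigvee_{i=0}^{m-1}f_k^{-i}\mathcal{P}_{k+i}\}_{k\ge1}$ for every $m\ge1$. An $\mathcal{E}$-$\mathcal{F}$-semiconjugacy is a sequence of measurable maps $\pi_n:X_n\to Y_n$ with $\pi_n\mu_n=\nu_n$ and $\pi_{n+1}\circ f_n=g_n\circ\pi_n$ for all $n$, such that $\{\mathcal{P}_n\}\in\mathcal{F}$ implies $\{\pi_n^{-1}(\mathcal{P}_n)\}\in\mathcal{E}$. *)

theory Defs
  imports "HOL-Probability.Probability"
begin

text \<open>Conventions: indices start at 0 (X_0, X_1, ...) instead of 1; this is a pure
  reindexing of the paper's setup.\<close>

definition is_partition :: "'a measure \<Rightarrow> 'a set set \<Rightarrow> bool" where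
  "is_partition M P \<longleftrightarrow> finite P \<and> P \<subseteq> sets M \<and> {} \<notin> P \<and>
     (\<forall>A\<in>P. \<forall>B\<in>P. A \<noteq> B \<longrightarrow> A \<inter> B = {}) \<and> \<Union>P = space M"

definition coarser :: "'a set set \<Rightarrow> 'a set set \<Rightarrow> bool" where
  "coarser Q P \<longleftrightarrow> (\<forall>A\<in>P. \<exists>B\<in>Q. A \<subseteq> B)"

definition join :: "'a set set \<Rightarrow> 'a set set \<Rightarrow> 'a set set" where
  "join P Q = {A \<inter> B | A B. A \<in> P \<and> B \<in> Q} - {{}}"

definition pull :: "('a \<Rightarrow> 'b) \<Rightarrow> 'a set \<Rightarrow> 'b set set \<Rightarrow> 'a set set" where
  "pull \<phi> S Q = {\<phi> -` B \<inter> S | B. B \<in> Q} - {{}}"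

fun joinN :: "'a set \<Rightarrow> (nat \<Rightarrow> 'a set set) \<Rightarrow> nat \<Rightarrow> 'a set set" where
  "joinN S Q 0 = {S}"
| "joinN S Q (Suc n) = join (joinN S Q n) (Q n)"

fun iter :: "(nat \<Rightarrow> 'a \<Rightarrow> 'a) \<Rightarrow> nat \<Rightarrow> nat \<Rightarrow> 'a \<Rightarrow> 'a" where
  "iter f k 0 = id"
| "iter f k (Suc n) = f (k + n) \<circ> iter f k n"

definition part_entropy :: "'a measure \<Rightarrow> 'a set set \<Rightarrow> real" where
  "part_entropy M P = - (\<Sum>A\<in>P. measure M A * ln (measure M A))"

definition metric_NDS :: "(nat \<Rightarrow> 'a measure) \<Rightarrow> (nat \<Rightarrow> 'a \<Rightarrow> 'a) \<Rightarrow> bool" where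
  "metric_NDS M f \<longleftrightarrow> (\<forall>n. prob_space (M n) \<and> f n \<in> measurable (M n) (M (Suc n)) \<and>
      distr (M n) (M (Suc n)) (f n) = M (Suc n))"

definition block_join :: "(nat \<Rightarrow> 'a measure) \<Rightarrow> (nat \<Rightarrow> 'a \<Rightarrow> 'a) \<Rightarrow> (nat \<Rightarrow> 'a set set)
    \<Rightarrow> nat \<Rightarrow> nat \<Rightarrow> 'a set set" where
  "block_join M f P m k = joinN (space (M k)) (\<lambda>i. pull (iter f k i) (space (M k)) (P (k + i))) m"

definition ent_seq :: "(nat \<Rightarrow> 'a measure) \<Rightarrow> (nat \<Rightarrow> 'a \<Rightarrow> 'a) \<Rightarrow> (nat \<Rightarrow> 'a set set) \<Rightarrow> ereal" where
  "ent_seq M f P = limsup (\<lambda>n. ereal (part_entropy (M 0) (block_join M f P n 0) / real n))"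

definition ent_class :: "(nat \<Rightarrow> 'a measure) \<Rightarrow> (nat \<Rightarrow> 'a \<Rightarrow> 'a) \<Rightarrow> (nat \<Rightarrow> 'a set set) set \<Rightarrow> ereal" where
  "ent_class M f E = (SUP P\<in>E. ent_seq M f P)"

definition admissible :: "(nat \<Rightarrow> 'a measure) \<Rightarrow> (nat \<Rightarrow> 'a \<Rightarrow> 'a) \<Rightarrow> (nat \<Rightarrow> 'a set set) set \<Rightarrow> bool" where
  "admissible M f E \<longleftrightarrow> E \<noteq> {} \<and>
     (\<forall>P\<in>E. \<forall>n. is_partition (M n) (P n)) \<and>
     (\<forall>P\<in>E. \<exists>N::nat. \<forall>n. card (P n) \<le> N) \<and>
     (\<forall>P\<in>E. \<forall>Q. (\<forall>n. is_partition (M n) (Q n) \<and> coarser (Q n) (P n)) \<longrightarrow> Q \<in> E) \<and>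
     (\<forall>P\<in>E. \<forall>m\<ge>1. block_join M f P m \<in> E)"

definition semiconj :: "(nat \<Rightarrow> 'a measure) \<Rightarrow> (nat \<Rightarrow> 'a \<Rightarrow> 'a) \<Rightarrow> (nat \<Rightarrow> 'a set set) set \<Rightarrow>
    (nat \<Rightarrow> 'b measure) \<Rightarrow> (nat \<Rightarrow> 'b \<Rightarrow> 'b) \<Rightarrow> (nat \<Rightarrow> 'b set set) set \<Rightarrow>
    (nat \<Rightarrow> 'a \<Rightarrow> 'b) \<Rightarrow> bool" where
  "semiconj M f E N g F \<pi> \<longleftrightarrow>
     (\<forall>n. \<pi> n \<in> measurable (M n) (N n) \<and> distr (M n) (N n) (\<pi> n) = N n \<and>
          (\<forall>x\<in>space (M n). \<pi> (Suc n) (f n x) = g n (\<pi> n x))) \<and>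
     (\<forall>Q\<in>F. (\<lambda>n. pull (\<pi> n) (space (M n)) (Q n)) \<in> E)"

end

theory Submission
  imports Defs
begin

text \<open>Pulling a partition sequence of the factor back along the semiconjugacy commutes with
  taking the refined partitions \<open>join\<^sub>i\<^sub><\<^sub>n g\<^sub>0\<^sup>-\<^sup>i Q\<^sub>i\<close>, because \<open>\<pi>\<^sub>i \<circ> f\<^sub>0\<^sup>i = g\<^sub>0\<^sup>i \<circ> \<pi>\<^sub>0\<close>, and since \<open>\<pi>\<^sub>0\<close> is
  measure preserving the pulled-back partitions have the same entropy.  Hence every entropy
  \<open>h(g; Q)\<close> with \<open>Q \<in> F\<close> equals \<open>h(f; \<pi>\<^sup>-\<^sup>1Q)\<close>, which is one of the entropies in the supremum
  defining \<open>h\<^sub>E(f)\<close>.\<close>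

lemma mem_pull: "C \<in> pull \<phi> S Q \<longleftrightarrow> (\<exists>B\<in>Q. C = \<phi> -` B \<inter> S) \<and> C \<noteq> {}"
  unfolding pull_def by blast

lemma mem_join: "C \<in> join P Q \<longleftrightarrow> (\<exists>A\<in>P. \<exists>B\<in>Q. C = A \<inter> B) \<and> C \<noteq> {}"
  unfolding join_def by blast

lemma pull_comp:
  assumes "\<phi> ` S \<subseteq> T"
  shows "pull \<phi> S (pull \<psi> T Q) = pull (\<psi> \<circ> \<phi>) S Q"
proof (rule set_eqI)
  fix C
  have preimage: "\<phi> -` (\<psi> -` B \<inter> T) \<inter> S = (\<psi> \<circ> \<phi>) -` B \<inter> S" for B
    using assms by auto
  show "C \<in> pull \<phi> S (pull \<psi> T Q) \<longleftrightarrow> C \<in> pull (\<psi> \<circ> \<phi>) S Q"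
  proof
    assume "C \<in> pull \<phi> S (pull \<psi> T Q)"
    then obtain B where "B \<in> Q" "C = \<phi> -` (\<psi> -` B \<inter> T) \<inter> S" "C \<noteq> {}"
      unfolding Bex_def mem_pull by blast
    then show "C \<in> pull (\<psi> \<circ> \<phi>) S Q"
      unfolding mem_pull preimage by blast
  next
    assume "C \<in> pull (\<psi> \<circ> \<phi>) S Q"
    then obtain B where B: "B \<in> Q" and C: "C = (\<psi> \<circ> \<phi>) -` B \<inter> S" "C \<noteq> {}"
      unfolding mem_pull by blast
    then obtain x where "x \<in> S" "\<psi> (\<phi> x) \<in> B"
      by auto
    then have "\<phi> x \<in> \<psi> -` B \<inter> T"
      using assms by auto
    then have "\<psi> -` B \<inter> T \<in> pull \<psi> T Q"
      unfolding mem_pull using B by (intro conjI bexI[of _ B]) auto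
    moreover have "C = \<phi> -` (\<psi> -` B \<inter> T) \<inter> S"
      using C(1) preimage[of B] by simp
    ultimately show "C \<in> pull \<phi> S (pull \<psi> T Q)"
      unfolding mem_pull[of C] using C(2) by blast
  qed
qed

lemma pull_cong:
  assumes "\<And>x. x \<in> S \<Longrightarrow> \<phi> x = \<psi> x"
  shows "pull \<phi> S Q = pull \<psi> S Q"
proof -
  have "\<phi> -` B \<inter> S = \<psi> -` B \<inter> S" for B
    using assms by auto
  then show ?thesis
    unfolding pull_def by simp
qed

lemma join_pull: "join (pull \<phi> S P) (pull \<phi> S Q) = pull \<phi> S (join P Q)"
proof (rule set_eqI)
  fix C
  have preimage: "(\<phi> -` A \<inter> S) \<inter> (\<phi> -` B \<inter> S) = \<phi> -` (A \<inter> B) \<inter> S" for A B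
    by auto
  show "C \<in> join (pull \<phi> S P) (pull \<phi> S Q) \<longleftrightarrow> C \<in> pull \<phi> S (join P Q)"
  proof
    assume "C \<in> join (pull \<phi> S P) (pull \<phi> S Q)"
    then obtain A B where "A \<in> P" "B \<in> Q" "C = \<phi> -` (A \<inter> B) \<inter> S" "C \<noteq> {}"
      unfolding mem_join Bex_def mem_pull preimage by blast
    moreover from this have "A \<inter> B \<in> join P Q"
      unfolding mem_join by blast
    ultimately show "C \<in> pull \<phi> S (join P Q)"
      unfolding mem_pull[of C] by blast
  next
    assume "C \<in> pull \<phi> S (join P Q)"
    then obtain A B where "A \<in> P" "B \<in> Q" "C = \<phi> -` (A \<inter> B) \<inter> S" "C \<noteq> {}"
      unfolding mem_pull Bex_def mem_join by blast
    moreover from this have "\<phi> -` A \<inter> S \<in> pull \<phi> S P" "\<phi> -` B \<inter> S \<in> pull \<phi> S Q"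
      unfolding mem_pull by blast+
    ultimately show "C \<in> join (pull \<phi> S P) (pull \<phi> S Q)"
      unfolding mem_join[of C] preimage[symmetric] by blast
  qed
qed

lemma joinN_pull:
  assumes "\<phi> ` S \<subseteq> T" "S \<noteq> {}"
  shows "joinN S (\<lambda>i. pull \<phi> S (Q i)) n = pull \<phi> S (joinN T Q n)"
proof (induction n)
  case 0
  have "\<phi> -` T \<inter> S = S"
    using assms(1) by auto
  then show ?case
    using assms(2) by (simp add: pull_def)
qed (simp add: join_pull)

definition finite_disjoint_sets :: "'a measure \<Rightarrow> 'a set set \<Rightarrow> bool" where
  "finite_disjoint_sets M P \<longleftrightarrow> finite P \<and> P \<subseteq> sets M \<and> disjoint P"

lemma is_partition_imp_finite_disjoint_sets:
  "is_partition M P \<Longrightarrow> finite_disjoint_sets M P"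
  unfolding is_partition_def finite_disjoint_sets_def disjoint_def by simp

lemma finite_disjoint_sets_join:
  assumes P: "finite_disjoint_sets M P" and Q: "finite_disjoint_sets M Q"
  shows "finite_disjoint_sets M (join P Q)"
proof -
  have "join P Q \<subseteq> (\<lambda>(A, B). A \<inter> B) ` (P \<times> Q)"
    unfolding join_def by auto
  then have "finite (join P Q)"
    using P Q unfolding finite_disjoint_sets_def by (meson finite_SigmaI finite_imageI finite_subset)
  moreover have "join P Q \<subseteq> sets M"
    using P Q unfolding finite_disjoint_sets_def join_def by auto
  moreover have "disjoint (join P Q)"
  proof (rule disjointI)
    fix C D assume "C \<in> join P Q" "D \<in> join P Q" "C \<noteq> D"
    then obtain A B A' B' where "A \<in> P" "B \<in> Q" "A' \<in> P" "B' \<in> Q" "C = A \<inter> B" "D = A' \<inter> B'"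
      unfolding mem_join by blast
    moreover from this \<open>C \<noteq> D\<close> have "A \<noteq> A' \<or> B \<noteq> B'"
      by auto
    ultimately have "A \<inter> A' = {} \<or> B \<inter> B' = {}"
      using P Q unfolding finite_disjoint_sets_def by (auto dest: disjointD)
    then show "C \<inter> D = {}"
      using \<open>C = A \<inter> B\<close> \<open>D = A' \<inter> B'\<close> by auto
  qed
  ultimately show ?thesis
    unfolding finite_disjoint_sets_def by simp
qed

lemma finite_disjoint_sets_joinN:
  assumes "T \<in> sets M" "\<And>i. finite_disjoint_sets M (Q i)"
  shows "finite_disjoint_sets M (joinN T Q n)"
  using assms
  by (induction n) (auto simp: finite_disjoint_sets_def[of M "{T}"] finite_disjoint_sets_join)

lemma finite_disjoint_sets_pull:
  assumes \<phi>: "\<phi> \<in> measurable M N" and Q: "finite_disjoint_sets N Q"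
  shows "finite_disjoint_sets M (pull \<phi> (space M) Q)"
proof -
  have "finite (pull \<phi> (space M) Q)" "pull \<phi> (space M) Q \<subseteq> sets M"
    using Q measurable_sets[OF \<phi>] unfolding finite_disjoint_sets_def pull_def by auto
  moreover have "disjoint (pull \<phi> (space M) Q)"
  proof (rule disjointI)
    fix C D assume "C \<in> pull \<phi> (space M) Q" "D \<in> pull \<phi> (space M) Q" "C \<noteq> D"
    then obtain A B where "A \<in> Q" "B \<in> Q" "C = \<phi> -` A \<inter> space M" "D = \<phi> -` B \<inter> space M"
      unfolding mem_pull by blast
    moreover from this \<open>C \<noteq> D\<close> have "A \<inter> B = {}"
      using Q unfolding finite_disjoint_sets_def by (auto dest: disjointD)
    ultimately show "C \<inter> D = {}"
      by auto
  qed
  ultimately show ?thesis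
    unfolding finite_disjoint_sets_def by simp
qed

lemma part_entropy_pull:
  assumes \<phi>: "\<phi> \<in> measurable M N" "distr M N \<phi> = N" and Q: "finite_disjoint_sets N Q"
  shows "part_entropy M (pull \<phi> (space M) Q) = part_entropy N Q"
proof -
  define pre where "pre B = \<phi> -` B \<inter> space M" for B
  define Q' where "Q' = {B \<in> Q. pre B \<noteq> {}}"
  have measure_pre: "measure M (pre B) = measure N B" if "B \<in> Q" for B
  proof -
    have "B \<in> sets N"
      using Q that unfolding finite_disjoint_sets_def by auto
    then have "measure (distr M N \<phi>) B = measure M (pre B)"
      unfolding pre_def by (simp add: measure_distr \<phi>(1))
    then show ?thesis
      using \<phi>(2) by simp
  qed
  have "pull \<phi> (space M) Q = pre ` Q'"
    unfolding pull_def Q'_def pre_def by auto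
  moreover have "inj_on pre Q'"
  proof (rule inj_onI)
    fix A B assume "A \<in> Q'" "B \<in> Q'" "pre A = pre B"
    then have "A \<inter> B \<noteq> {}"
      unfolding Q'_def pre_def by auto
    then show "A = B"
      using \<open>A \<in> Q'\<close> \<open>B \<in> Q'\<close> Q unfolding Q'_def finite_disjoint_sets_def
      by (auto dest: disjointD)
  qed
  moreover have "(\<Sum>B\<in>Q'. measure N B * ln (measure N B)) = (\<Sum>B\<in>Q. measure N B * ln (measure N B))"
  proof (rule sum.mono_neutral_left)
    show "\<forall>B\<in>Q - Q'. measure N B * ln (measure N B) = 0"
      using measure_pre unfolding Q'_def by force
  qed (use Q in \<open>auto simp: Q'_def finite_disjoint_sets_def\<close>)
  ultimately show ?thesis
    unfolding part_entropy_def by (simp add: sum.reindex Q'_def measure_pre)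
qed

lemma iter_measurable:
  assumes "\<And>n. f n \<in> measurable (M n) (M (Suc n))"
  shows "iter f k i \<in> measurable (M k) (M (k + i))"
proof (induction i)
  case (Suc i)
  show ?case
    using measurable_comp[OF Suc.IH assms[of "k + i"]] by (simp add: comp_def)
qed simp

lemma iter_semiconj:
  assumes "\<And>n. f n \<in> measurable (M n) (M (Suc n))"
    and "\<And>n x. x \<in> space (M n) \<Longrightarrow> \<pi> (Suc n) (f n x) = g n (\<pi> n x)"
    and "x \<in> space (M k)"
  shows "\<pi> (k + i) (iter f k i x) = iter g k i (\<pi> k x)"
proof (induction i)
  case (Suc i)
  have "iter f k i x \<in> space (M (k + i))"
    using measurable_space[OF iter_measurable[of f M, OF assms(1)] assms(3)] .
  then show ?case
    using Suc assms(2) by simp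
qed simp

lemma block_join_pull:
  assumes f: "\<And>n. f n \<in> measurable (M n) (M (Suc n))"
    and \<pi>: "\<And>n. \<pi> n \<in> measurable (M n) (N n)"
    and comm: "\<And>n x. x \<in> space (M n) \<Longrightarrow> \<pi> (Suc n) (f n x) = g n (\<pi> n x)"
    and nonempty: "space (M k) \<noteq> {}"
  shows "block_join M f (\<lambda>n. pull (\<pi> n) (space (M n)) (Q n)) m k
    = pull (\<pi> k) (space (M k)) (block_join N g Q m k)"
proof -
  define S where "S = space (M k)"
  define T where "T = space (N k)"
  have \<pi>_S: "\<pi> k ` S \<subseteq> T"
    unfolding S_def T_def using measurable_space[OF \<pi>] by blast
  have "pull (iter f k i) S (pull (\<pi> (k + i)) (space (M (k + i))) (Q (k + i)))
      = pull (\<pi> k) S (pull (iter g k i) T (Q (k + i)))" for i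
  proof -
    have "iter f k i ` S \<subseteq> space (M (k + i))"
      unfolding S_def using measurable_space[OF iter_measurable[of f M, OF f]] by blast
    then have "pull (iter f k i) S (pull (\<pi> (k + i)) (space (M (k + i))) (Q (k + i)))
        = pull (\<pi> (k + i) \<circ> iter f k i) S (Q (k + i))"
      by (rule pull_comp)
    also have "\<dots> = pull (iter g k i \<circ> \<pi> k) S (Q (k + i))"
      by (rule pull_cong) (simp add: iter_semiconj[of f M \<pi> g, OF f comm] S_def)
    also have "\<dots> = pull (\<pi> k) S (pull (iter g k i) T (Q (k + i)))"
      by (rule pull_comp[OF \<pi>_S, symmetric])
    finally show ?thesis .
  qed
  then show ?thesis
    unfolding block_join_def S_def[symmetric] T_def[symmetric]
    using joinN_pull[OF \<pi>_S nonempty[folded S_def]] by simp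
qed

lemma finite_disjoint_sets_block_join:
  assumes "\<And>n. f n \<in> measurable (M n) (M (Suc n))" "\<And>n. finite_disjoint_sets (M n) (Q n)"
  shows "finite_disjoint_sets (M k) (block_join M f Q m k)"
  unfolding block_join_def
proof (intro finite_disjoint_sets_joinN sets.top)
  show "finite_disjoint_sets (M k) (pull (iter f k i) (space (M k)) (Q (k + i)))" for i
    using iter_measurable[of f M, OF assms(1)] assms(2) by (rule finite_disjoint_sets_pull)
qed

lemma ent_seq_pull:
  assumes f: "\<And>n. f n \<in> measurable (M n) (M (Suc n))"
    and g: "\<And>n. g n \<in> measurable (N n) (N (Suc n))"
    and \<pi>: "\<And>n. \<pi> n \<in> measurable (M n) (N n)" "\<And>n. distr (M n) (N n) (\<pi> n) = N n"
    and comm: "\<And>n x. x \<in> space (M n) \<Longrightarrow> \<pi> (Suc n) (f n x) = g n (\<pi> n x)"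
    and nonempty: "space (M 0) \<noteq> {}"
    and Q: "\<And>n. finite_disjoint_sets (N n) (Q n)"
  shows "ent_seq M f (\<lambda>n. pull (\<pi> n) (space (M n)) (Q n)) = ent_seq N g Q"
proof -
  have "part_entropy (M 0) (block_join M f (\<lambda>n. pull (\<pi> n) (space (M n)) (Q n)) m 0)
      = part_entropy (N 0) (block_join N g Q m 0)" for m
    using block_join_pull[OF f \<pi>(1) comm nonempty]
      part_entropy_pull[OF \<pi> finite_disjoint_sets_block_join[of g N, OF g Q]]
    by simp
  then show ?thesis
    unfolding ent_seq_def by simp
qed

theorem mainTheorem3:
  fixes M :: "nat \<Rightarrow> 'a measure" and f :: "nat \<Rightarrow> 'a \<Rightarrow> 'a"
    and N :: "nat \<Rightarrow> 'b measure" and g :: "nat \<Rightarrow> 'b \<Rightarrow> 'b"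
    and E :: "(nat \<Rightarrow> 'a set set) set" and F :: "(nat \<Rightarrow> 'b set set) set"
    and \<pi> :: "nat \<Rightarrow> 'a \<Rightarrow> 'b"
  assumes "metric_NDS M f" and "metric_NDS N g"
    and "admissible M f E" and "admissible N g F"
    and "semiconj M f E N g F \<pi>"
  shows "ent_class N g F \<le> ent_class M f E"
  unfolding ent_class_def
proof (rule SUP_least)
  fix Q assume "Q \<in> F"
  then have pulled_in_E: "(\<lambda>n. pull (\<pi> n) (space (M n)) (Q n)) \<in> E"
    and "\<And>n. finite_disjoint_sets (N n) (Q n)"
    using assms(4,5) is_partition_imp_finite_disjoint_sets
    unfolding admissible_def semiconj_def by blast+
  moreover have "space (M 0) \<noteq> {}"
    using assms(1) prob_space.not_empty unfolding metric_NDS_def by blast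
  ultimately have "ent_seq N g Q = ent_seq M f (\<lambda>n. pull (\<pi> n) (space (M n)) (Q n))"
    using assms(1,2,5) unfolding metric_NDS_def semiconj_def
    by (intro ent_seq_pull[symmetric]) blast+
  also have "\<dots> \<le> (SUP P\<in>E. ent_seq M f P)"
    using pulled_in_E by (rule SUP_upper)
  finally show "ent_seq N g Q \<le> (SUP P\<in>E. ent_seq M f P)" .
qed

end
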